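(* Let $m\ge1$. Then: (1) for every $h\in[0,2]$ the infimum defining $\delta_m(h)$ is attained, i.e. there is $P\in\mathfrak{P}_m(\Gamma)$ (equivalently a point $\phi^*\in\mathbb{R}^m$) with $\mathrm{mes}\{t\in\mathbb{T}:|P(e^{it})|\ge h\}=\delta_m(h)$; (2) $\delta_m(0)=2\pi$ and $\delta_m(2)=0$; (3) $\delta_m$ is strictly decreasing on $[0,2]$.
   Context: $\Gamma=\{e^{it}:t\in[0,2\pi]\}$ is the unit circle. $\mathfrak{P}_m(\Gamma)$ is the set of algebraic polynomials $P(z)=\prod_{j=1}^m(z-e^{i\phi_j})$, $\phi=(\phi_1,\dots,\phi_m)\in\mathbb{R}^m$, i.e. monic polynomials of degree $m$ all of whose zeros lie on $\Gamma$. $\mathbb{T}=[0,2\pi)$ with endpoints identified, with Lebesgue measure $\mathrm{mes}$. For $0\le h\le 2$, $\delta_m(h)=\inf\{\mathrm{mes}\{t\in\mathbb{T}:|P(e^{it})|\ge h\}:P\in\mathfrak{P}_m(\Gamma)\}$. Equivalently, with $g_m(t;\phi)=\prod_{j=1}^m 2\sin\frac{t-\phi_j}{2}$ (so $|g_m(t;\phi)|=|P(e^{it})|$), $\delta_m(h)=\inf_{\phi\in\mathbb{R}^m}\mathrm{mes}\{t\in[0,2\pi]:|g_m(t;\phi)|\ge h\}$. *)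

theory Defs
  imports "HOL-Analysis.Analysis"
begin

definition circP :: "real list \<Rightarrow> complex \<Rightarrow> complex" where
  "circP \<phi> z = (\<Prod>x\<leftarrow>\<phi>. z - cis x)"

definition levelmes :: "real list \<Rightarrow> real \<Rightarrow> real" where
  "levelmes \<phi> h = measure lborel {t \<in> {0..<2*pi}. h \<le> cmod (circP \<phi> (cis t))}"

definition delta :: "nat \<Rightarrow> real \<Rightarrow> real" where
  "delta m h = Inf {levelmes \<phi> h | \<phi>. length \<phi> = m}"

end

theory Submission
  imports Defs
begin

text \<open>
  Write \<open>gmod \<phi> t = |P(e^{it})|\<close> for the polynomial with zero angles \<open>\<phi>\<close>.
  The proof rests on four facts about a single polynomial of degree \<open>m \<ge> 1\<close>:
  (a) every level set \<open>{t. gmod \<phi> t = h}\<close> in a period is finite, since on the circle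
      \<open>|P(z)|\<^sup>2 = h\<^sup>2\<close> is the polynomial equation \<open>P(z) z\<^sup>m conj(P(z)) = h\<^sup>2 z\<^sup>m\<close>;
  (b) \<open>max gmod \<phi> \<ge> 2\<close>, by averaging \<open>P\<close> over a rotated set of \<open>m\<close>-th roots of unity;
  (c) \<open>P(z) = z\<^sup>m - 1\<close> satisfies \<open>gmod \<le> 2\<close>;
  (d) \<open>gmod \<phi>\<close> depends Lipschitz-continuously on the points \<open>e^{i\<phi>\<^sub>j}\<close>.
  Attainment of \<open>\<delta>\<^sub>m(h)\<close>: reduce a minimising sequence of angle vectors to \<open>[0,2\<pi>]\<close>, extract
  a convergent subsequence, and use (d) together with (a) (which makes the sets
  \<open>{gmod \<ge> h}\<close> and \<open>{gmod > h}\<close> equal up to a null set) to see that the limit is a minimiser.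
  \<open>\<delta>\<^sub>m(0) = 2\<pi>\<close> is trivial and \<open>\<delta>\<^sub>m(2) = 0\<close> follows from (c) and (a).
  Strict decrease: for a minimiser \<open>\<phi>\<close> at level \<open>h\<^sub>1\<close>, the continuous function \<open>gmod \<phi>\<close> takes
  the value \<open>(h\<^sub>1+h\<^sub>2)/2\<close> by (b) and the intermediate value theorem, hence lies strictly
  between \<open>h\<^sub>1\<close> and \<open>h\<^sub>2\<close> on an interval of positive length.
\<close>

section \<open>The polynomial on the unit circle\<close>

lemma circP_Nil [simp]: "circP [] z = 1"
  by (simp add: circP_def)

lemma circP_Cons [simp]: "circP (a # \<phi>) z = (z - cis a) * circP \<phi> z"
  by (simp add: circP_def)

lemma circP_root: "x \<in> set \<phi> \<Longrightarrow> circP \<phi> (cis x) = 0"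
  by (induction \<phi>) auto

lemma norm_circP_0: "cmod (circP \<phi> 0) = 1"
  by (induction \<phi>) (auto simp: norm_mult)

text \<open>On the closed unit disc every factor has modulus at most 2.\<close>
lemma norm_circP_le:
  assumes "cmod z \<le> 1"
  shows "cmod (circP \<phi> z) \<le> 2 ^ length \<phi>"
proof (induction \<phi>)
  case (Cons a \<phi>)
  have "cmod (z - cis a) \<le> 2"
    using assms norm_triangle_ineq4[of z "cis a"] by simp
  then show ?case
    using Cons by (simp add: norm_mult mult_mono)
qed simp

lemma circP_lipschitz:
  assumes "cmod z \<le> 1" and "length \<psi> = length \<phi>"
  shows "cmod (circP \<psi> z - circP \<phi> z)
           \<le> 2 ^ length \<phi> * (\<Sum>i<length \<phi>. cmod (cis (\<psi> ! i) - cis (\<phi> ! i)))"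
  using assms(2)
proof (induction \<phi> arbitrary: \<psi>)
  case (Cons a \<phi>)
  then obtain b \<psi>' where \<psi>: "\<psi> = b # \<psi>'" "length \<psi>' = length \<phi>"
    by (cases \<psi>) auto
  define S where "S = (\<Sum>i<length \<phi>. cmod (cis (\<psi>' ! i) - cis (\<phi> ! i)))"
  have split: "circP \<psi> z - circP (a # \<phi>) z
      = (z - cis b) * (circP \<psi>' z - circP \<phi> z) + (cis a - cis b) * circP \<phi> z"
    using \<psi> by (simp add: algebra_simps)
  have "cmod (z - cis b) \<le> 2"
    using assms(1) norm_triangle_ineq4[of z "cis b"] by simp
  moreover have "cmod (circP \<phi> z) \<le> 2 ^ length \<phi>"
    using norm_circP_le[OF assms(1)] .
  moreover have "cmod (circP \<psi>' z - circP \<phi> z) \<le> 2 ^ length \<phi> * S"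
    using Cons.IH[OF \<psi>(2)] by (simp add: S_def)
  ultimately have "cmod (circP \<psi> z - circP (a # \<phi>) z)
      \<le> 2 * (2 ^ length \<phi> * S) + cmod (cis b - cis a) * 2 ^ length \<phi>"
    unfolding split
    by (intro order.trans[OF norm_triangle_ineq] add_mono)
       (auto simp: norm_mult norm_minus_commute intro!: mult_mono)
  also have "\<dots> \<le> 2 ^ length (a # \<phi>) * (cmod (cis b - cis a) + S)"
    by (simp add: algebra_simps)
  also have "cmod (cis b - cis a) + S
      = (\<Sum>i<length (a # \<phi>). cmod (cis (\<psi> ! i) - cis ((a # \<phi>) ! i)))"
    using \<psi> by (simp add: S_def sum.lessThan_Suc_shift del: sum.lessThan_Suc)
  finally show ?case .
qed simp

abbreviation gmod :: "real list \<Rightarrow> real \<Rightarrow> real" where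
  "gmod \<phi> t \<equiv> cmod (circP \<phi> (cis t))"

lemma continuous_on_gmod: "continuous_on A (gmod \<phi>)"
proof -
  have "continuous_on UNIV (\<lambda>t. circP \<phi> (cis t))"
    by (induction \<phi>) (auto intro!: continuous_intros simp: cis_conv_exp)
  then show ?thesis
    by (auto intro: continuous_on_subset continuous_on_norm)
qed

lemma gmod_uniform_limit:
  assumes len: "\<And>n. length (\<phi>s n) = length \<psi>"
    and lim: "\<And>i. i < length \<psi> \<Longrightarrow> (\<lambda>n. \<phi>s n ! i) \<longlonglongrightarrow> \<psi> ! i"
    and "e > 0"
  shows "\<forall>\<^sub>F n in sequentially. \<forall>t. \<bar>gmod (\<phi>s n) t - gmod \<psi> t\<bar> < e"
proof -
  define m where "m = length \<psi>"
  define E where "E n = (\<Sum>i<m. cmod (cis (\<phi>s n ! i) - cis (\<psi> ! i)))" for n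
  have "E \<longlonglongrightarrow> (\<Sum>i<m. cmod (cis (\<psi> ! i) - cis (\<psi> ! i)))"
    unfolding E_def m_def using lim by (intro tendsto_intros) auto
  then have "\<forall>\<^sub>F n in sequentially. E n < e / 2 ^ m"
    using \<open>e > 0\<close> by (intro order_tendstoD(2)) auto
  then show ?thesis
  proof eventually_elim
    case (elim n)
    show ?case
    proof
      fix t
      have "\<bar>gmod (\<phi>s n) t - gmod \<psi> t\<bar> \<le> cmod (circP (\<phi>s n) (cis t) - circP \<psi> (cis t))"
        by (rule norm_triangle_ineq3)
      also have "\<dots> \<le> 2 ^ m * E n"
        using circP_lipschitz[of "cis t" "\<phi>s n" \<psi>] len by (simp add: E_def m_def)
      also have "\<dots> < e"
        using elim by (simp add: field_simps)
      finally show "\<bar>gmod (\<phi>s n) t - gmod \<psi> t\<bar> < e" .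
    qed
  qed
qed


section \<open>Polynomial facts\<close>

text \<open>\<open>circP \<phi>\<close> as a formal polynomial, and its reciprocal-conjugate companion, which
  agrees with \<open>z\<^sup>m conj (P(z))\<close> on the unit circle.\<close>
definition circ_poly :: "real list \<Rightarrow> complex poly" where
  "circ_poly \<phi> = prod_list (map (\<lambda>x. [:-cis x, 1:]) \<phi>)"

definition circ_recip_poly :: "real list \<Rightarrow> complex poly" where
  "circ_recip_poly \<phi> = prod_list (map (\<lambda>x. [:1, -cnj (cis x):]) \<phi>)"

lemma poly_circ_poly: "poly (circ_poly \<phi>) z = circP \<phi> z"
  by (induction \<phi>) (auto simp: circ_poly_def algebra_simps)

lemma degree_circ_poly: "degree (circ_poly \<phi>) \<le> length \<phi>"
proof (induction \<phi>)
  case (Cons a \<phi>)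
  have "circ_poly (a # \<phi>) = [:-cis a, 1:] * circ_poly \<phi>"
    by (simp add: circ_poly_def)
  then have "degree (circ_poly (a # \<phi>)) \<le> degree [:-cis a, 1:] + degree (circ_poly \<phi>)"
    by (simp only: degree_mult_le)
  with Cons show ?case by simp
qed (simp add: circ_poly_def)

lemma lead_coeff_circ_poly: "coeff (circ_poly \<phi>) (length \<phi>) = 1"
proof (induction \<phi>)
  case (Cons a \<phi>)
  have "circ_poly (a # \<phi>) = smult (-cis a) (circ_poly \<phi>) + pCons 0 (circ_poly \<phi>)"
    by (simp add: circ_poly_def)
  moreover have "coeff (circ_poly \<phi>) (Suc (length \<phi>)) = 0"
    using degree_circ_poly[of \<phi>] by (intro coeff_eq_0) auto
  ultimately show ?case using Cons by simp
qed (simp add: circ_poly_def)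

lemma poly_circ_recip_poly:
  assumes "cmod z = 1"
  shows "poly (circ_recip_poly \<phi>) z = z ^ length \<phi> * cnj (circP \<phi> z)"
proof (induction \<phi>)
  case (Cons a \<phi>)
  have "z * cnj z = 1"
    using complex_norm_square[of z] assms by simp
  then have "poly (circ_recip_poly (a # \<phi>)) z
      = (z * cnj z - cnj (cis a) * z) * (z ^ length \<phi> * cnj (circP \<phi> z))"
    using Cons by (simp add: circ_recip_poly_def algebra_simps)
  then show ?case by (simp add: algebra_simps)
qed (simp add: circ_recip_poly_def)

lemma inj_on_cis_period: "inj_on cis {0..<2*pi}"
proof (rule inj_onI)
  fix s t assume st: "s \<in> {0..<2*pi}" "t \<in> {0..<2*pi}" "cis s = cis t"
  then have "cis (s - t) = 1"
    by (simp add: cis_divide[symmetric])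
  then have "cos (s - t) = 1"
    by (simp add: complex_eq_iff)
  then obtain n :: int where n: "s - t = n * 2 * pi"
    by (auto simp: cos_one_2pi_int)
  have "\<bar>real_of_int n\<bar> * (2*pi) = \<bar>s - t\<bar>"
    using n by (simp add: abs_mult)
  also have "\<dots> < 1 * (2*pi)"
    using st by auto
  finally have "n = 0"
    by simp
  then show "s = t" using n by simp
qed

text \<open>On the circle,
  \<open>gmod \<phi> t = h\<close> means that \<open>e^{it}\<close> is a root of the nonzero polynomial
  \<open>P(z) R(z) - h\<^sup>2 z\<^sup>m\<close> (nonzero because its value at 0 has modulus 1).\<close>
lemma finite_level_set:
  assumes "length \<phi> \<ge> 1"
  shows "finite {t\<in>{0..<2*pi}. gmod \<phi> t = h}"
proof -
  define m where "m = length \<phi>"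
  define Q where "Q = circ_poly \<phi> * circ_recip_poly \<phi> - monom (complex_of_real (h\<^sup>2)) m"
  have "poly (circ_recip_poly \<phi>) 0 = 1"
    by (induction \<phi>) (auto simp: circ_recip_poly_def)
  moreover have "(0::complex) ^ m = 0"
    using assms by (simp add: m_def Suc_le_eq)
  ultimately have "poly Q 0 = circP \<phi> 0"
    by (simp add: Q_def poly_circ_poly poly_monom)
  then have "Q \<noteq> 0"
    using norm_circP_0[of \<phi>] by auto
  have "cis ` {t\<in>{0..<2*pi}. gmod \<phi> t = h} \<subseteq> {z. poly Q z = 0}"
  proof clarify
    fix t :: real assume h: "h = gmod \<phi> t"
    have "poly Q (cis t)
        = cis t ^ m * (circP \<phi> (cis t) * cnj (circP \<phi> (cis t)) - complex_of_real (h\<^sup>2))"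
      by (simp add: Q_def poly_circ_poly poly_circ_recip_poly poly_monom m_def algebra_simps)
    also have "\<dots> = 0"
      using h complex_norm_square[of "circP \<phi> (cis t)"] by simp
    finally show "poly Q (cis t) = 0" .
  qed
  then have "finite (cis ` {t\<in>{0..<2*pi}. gmod \<phi> t = h})"
    using poly_roots_finite[OF \<open>Q \<noteq> 0\<close>] finite_subset by blast
  then show ?thesis
    by (rule finite_imageD[OF _ inj_on_subset[OF inj_on_cis_period]]) auto
qed

lemma poly_as_sum_upto:
  fixes q :: "'a::comm_semiring_1 poly"
  assumes "degree q \<le> m"
  shows "poly q x = (\<Sum>i\<le>m. coeff q i * x ^ i)"
  unfolding poly_altdef
  by (rule sum.mono_neutral_left) (use assms in \<open>auto intro!: le_degree\<close>)

text \<open>With \<open>\<omega> = e^{2\<pi>i/m}\<close>, the powers \<open>\<omega>\<^sup>i\<close>, \<open>0 < i < m\<close>, are \<open>m\<close>-th roots of unity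
  different from 1, so their geometric sums vanish.\<close>
lemma sum_root_of_unity_powers:
  fixes m :: nat
  assumes "m > 0" "i \<le> m"
  shows "(\<Sum>k<m. (cis (2 * pi / m) ^ i) ^ k) = (if i = 0 \<or> i = m then of_nat m else 0)"
proof -
  have pow: "cis (2 * pi / m) ^ j = cis (2 * pi * real j / real m)" for j
    by (simp add: Complex.DeMoivre field_simps)
  have unity: "cis (2 * pi / m) ^ m = 1"
    using assms(1) by (simp add: pow complex_eq_iff)
  show ?thesis
  proof (cases "i = 0 \<or> i = m")
    case True
    then show ?thesis using unity by auto
  next
    case False
    have inj: "inj_on (\<lambda>k. cis (2 * pi * real k / real m)) {..<m}"
      using Complex.bij_betw_roots_unity[OF assms(1)] by (simp add: bij_betw_def)
    have "cis (2 * pi / m) ^ i \<noteq> 1"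
    proof
      assume "cis (2 * pi / m) ^ i = 1"
      then have "cis (2 * pi * real i / real m) = cis (2 * pi * real 0 / real m)"
        by (simp add: pow)
      then have "i = 0"
        using False assms by (intro inj_onD[OF inj]) auto
      then show False using False by simp
    qed
    moreover have "(cis (2 * pi / m) ^ i) ^ m = 1"
      by (metis unity power_mult power_one mult.commute)
    ultimately show ?thesis
      using False by (subst geometric_sum) auto
  qed
qed

lemma average_over_roots_of_unity:
  fixes m :: nat
  assumes "m > 0" "degree q \<le> m"
  shows "(\<Sum>k<m. poly q (cis (2 * pi / m) ^ k * z)) = of_nat m * (coeff q 0 + coeff q m * z ^ m)"
proof -
  define w where "w = cis (2 * pi / m)"
  have "(\<Sum>k<m. poly q (w ^ k * z)) = (\<Sum>k<m. \<Sum>i\<le>m. coeff q i * (w ^ k * z) ^ i)"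
    using poly_as_sum_upto[OF assms(2)] by simp
  also have "\<dots> = (\<Sum>i\<le>m. coeff q i * z ^ i * (\<Sum>k<m. (w ^ i) ^ k))"
    by (subst sum.swap)
       (simp add: sum_distrib_left power_mult_distrib power_mult[symmetric] mult_ac)
  also have "\<dots> = (\<Sum>i\<le>m. if i = 0 \<or> i = m then coeff q i * z ^ i * of_nat m else 0)"
    unfolding w_def by (intro sum.cong refl) (simp add: sum_root_of_unity_powers[OF assms(1)])
  also have "\<dots> = (\<Sum>i\<in>{0,m}. coeff q i * z ^ i * of_nat m)"
    by (rule sum.mono_neutral_cong_right) auto
  also have "\<dots> = of_nat m * (coeff q 0 + coeff q m * z ^ m)"
    using assms(1) by (simp add: algebra_simps)
  finally show ?thesis unfolding w_def .
qed

text \<open>Choose \<open>z\<close> with \<open>z\<^sup>m = P(0)\<close>; then the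
  average of \<open>P(\<omega>\<^sup>k z)\<close> over \<open>k < m\<close> equals \<open>2 P(0)\<close>, which has modulus 2.\<close>
lemma max_gmod_ge_2:
  assumes "length \<phi> \<ge> 1"
  shows "\<exists>t. 2 \<le> gmod \<phi> t"
proof (rule ccontr)
  assume "\<not> ?thesis"
  then have lt: "gmod \<phi> t < 2" for t
    by (simp add: not_le)
  define m where "m = length \<phi>"
  have "m > 0" using assms by (simp add: m_def Suc_le_eq)
  define c where "c = coeff (circ_poly \<phi>) 0"
  have c1: "cmod c = 1"
    using norm_circP_0[of \<phi>] by (simp add: c_def poly_circ_poly poly_0_coeff_0[symmetric])
  define \<theta> where "\<theta> = Arg c / m"
  have "cis \<theta> ^ m = cis (Arg c)"
    using \<open>m > 0\<close> by (simp add: Complex.DeMoivre \<theta>_def)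
  also have "\<dots> = c"
  proof -
    have "c \<noteq> 0" using c1 by auto
    then show ?thesis using c1 by (simp add: cis_Arg sgn_div_norm)
  qed
  finally have zm: "cis \<theta> ^ m = c" .
  define avg where "avg = (\<Sum>k<m. poly (circ_poly \<phi>) (cis (2 * pi / m) ^ k * cis \<theta>))"
  have "avg = of_nat m * (c + c)"
    using average_over_roots_of_unity[OF \<open>m > 0\<close>, of "circ_poly \<phi>" "cis \<theta>"]
      degree_circ_poly[of \<phi>] lead_coeff_circ_poly[of \<phi>] zm
    by (simp add: avg_def m_def c_def)
  then have "cmod avg = 2 * m"
    using c1 by (simp add: norm_mult)
  moreover have "cmod avg < (\<Sum>k<m. 2)"
  proof -
    have "cmod avg \<le> (\<Sum>k<m. cmod (poly (circ_poly \<phi>) (cis (2 * pi / m) ^ k * cis \<theta>)))"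
      unfolding avg_def by (rule norm_sum)
    also have "\<dots> < (\<Sum>k<m. 2)"
    proof (rule sum_strict_mono)
      fix k
      have "cis (2 * pi / m) ^ k * cis \<theta> = cis (real k * (2 * pi / m) + \<theta>)"
        by (simp add: Complex.DeMoivre cis_mult)
      then show "cmod (poly (circ_poly \<phi>) (cis (2 * pi / m) ^ k * cis \<theta>)) < 2"
        by (simp add: poly_circ_poly lt)
    qed (use \<open>m > 0\<close> in auto)
    finally show ?thesis .
  qed
  ultimately show False by simp
qed

text \<open>Fact (c): the zeros at the \<open>m\<close>-th roots of unity give \<open>P(z) = z\<^sup>m - 1\<close>, because
  \<open>P - (z\<^sup>m - 1)\<close> has degree below \<open>m\<close> but vanishes at all \<open>m\<close> roots of unity.\<close>
lemma circP_roots_of_unity: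
  assumes "m > 0"
  shows "circP (map (\<lambda>k. 2 * pi * real k / real m) [0..<m]) z = z ^ m - 1"
proof -
  define \<phi> where "\<phi> = map (\<lambda>k. 2 * pi * real k / real m) [0..<m]"
  define root where "root k = cis (2 * pi * real k / real m)" for k
  define D where "D = circ_poly \<phi> - (monom 1 m - 1)"
  have "degree D \<le> m - 1"
  proof (rule degree_le, intro allI impI)
    fix i assume "m - 1 < i"
    then consider "i = m" | "i > m" by linarith
    then show "coeff D i = 0"
      using lead_coeff_circ_poly[of \<phi>] degree_circ_poly[of \<phi>] assms
      by cases (auto simp: D_def coeff_monom \<phi>_def coeff_eq_0)
  qed
  have roots: "bij_betw root {..<m} {z. z ^ m = 1}"
    unfolding root_def by (rule Complex.bij_betw_roots_unity[OF assms])
  have "D = 0"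
  proof (rule ccontr)
    assume "D \<noteq> 0"
    have "root ` {..<m} \<subseteq> {z. poly D z = 0}"
    proof clarify
      fix k assume "k < m"
      then have "poly (circ_poly \<phi>) (root k) = 0" "root k ^ m = 1"
        using roots by (auto simp: poly_circ_poly circP_root \<phi>_def root_def bij_betw_def)
      then show "poly D (root k) = 0"
        by (simp add: D_def poly_monom)
    qed
    then have "m \<le> card {z. poly D z = 0}"
      using card_mono[OF poly_roots_finite[OF \<open>D \<noteq> 0\<close>]] card_image roots
      by (metis bij_betw_def card_lessThan)
    also have "\<dots> \<le> m - 1"
      using \<open>D \<noteq> 0\<close> card_poly_roots_bound[of D] \<open>degree D \<le> m - 1\<close> by simp
    finally show False using assms by simp
  qed
  then show ?thesis
    using poly_circ_poly[of \<phi> z] by (simp add: D_def poly_monom \<phi>_def)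
qed

lemma exists_gmod_le_2:
  assumes "m > 0"
  shows "\<exists>\<phi>. length \<phi> = m \<and> (\<forall>t. gmod \<phi> t \<le> 2)"
proof (intro exI conjI allI)
  fix t
  show "gmod (map (\<lambda>k. 2 * pi * real k / real m) [0..<m]) t \<le> 2"
    using norm_triangle_ineq4[of "cis t ^ m" 1]
    by (simp add: circP_roots_of_unity[OF assms] norm_power)
qed simp


section \<open>Measure of superlevel sets\<close>

lemma sets_superlevel:
  fixes f :: "real \<Rightarrow> real"
  assumes "continuous_on UNIV f" and "A \<in> sets lborel"
  shows "{t\<in>A. c \<le> f t} \<in> sets lborel"
proof -
  have "closed {t. c \<le> f t}"
    using assms(1) by (intro closed_Collect_le continuous_intros)
  then have "A \<inter> {t. c \<le> f t} \<in> sets lborel"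
    using assms(2) by auto
  also have "A \<inter> {t. c \<le> f t} = {t\<in>A. c \<le> f t}"
    by auto
  finally show ?thesis .
qed

lemma sets_superlevel_gmod: "{t\<in>{0..<2*pi}. h \<le> gmod \<phi> t} \<in> sets lborel"
  using continuous_on_gmod by (rule sets_superlevel) simp

lemma fmeasurable_in_period:
  "A \<in> sets lborel \<Longrightarrow> A \<subseteq> {0..2*pi} \<Longrightarrow> A \<in> fmeasurable lborel"
  by (rule fmeasurableI2[of "{0..2*pi}"]) (use fmeasurable_cbox[of 0 "2*pi"] in auto)

lemma levelmes_bounds: "0 \<le> levelmes \<phi> h" "levelmes \<phi> h \<le> 2*pi"
proof -
  have "levelmes \<phi> h \<le> measure lborel {0..2*pi::real}"
    unfolding levelmes_def
    by (rule measure_mono_fmeasurable[OF _ sets_superlevel_gmod])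
       (use fmeasurable_cbox[of 0 "2*pi"] in auto)
  then show "0 \<le> levelmes \<phi> h" "levelmes \<phi> h \<le> 2*pi"
    by (simp_all add: levelmes_def)
qed

text \<open>By fact (a), the sets \<open>{gmod \<ge> h}\<close> and \<open>{gmod > h}\<close> differ by a null set.\<close>
lemma levelmes_eq_strict:
  assumes "length \<phi> \<ge> 1"
  shows "measure lborel {t\<in>{0..<2*pi}. h < gmod \<phi> t} = levelmes \<phi> h"
proof -
  have "{t\<in>{0..<2*pi}. h < gmod \<phi> t}
      = {t\<in>{0..<2*pi}. h \<le> gmod \<phi> t} - {t\<in>{0..<2*pi}. gmod \<phi> t = h}"
    by auto
  moreover have "{t\<in>{0..<2*pi}. gmod \<phi> t = h} \<in> null_sets lborel"
    by (rule finite_imp_null_set_lborel[OF finite_level_set[OF assms]])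
  ultimately show ?thesis
    unfolding levelmes_def using measure_Diff_null_set[OF sets_superlevel_gmod] by simp
qed

text \<open>Continuity of measure from below: the strict superlevel set \<open>{f > h}\<close> is the
  increasing union of the sets \<open>{f \<ge> h + 1/(k+1)}\<close>.\<close>
lemma measure_superlevel_limit:
  fixes f :: "real \<Rightarrow> real"
  assumes f: "continuous_on UNIV f" and A: "A \<in> sets lborel" "emeasure lborel A \<noteq> \<infinity>"
  shows "(\<lambda>k. measure lborel {t\<in>A. h + inverse (real (Suc k)) \<le> f t})
           \<longlonglongrightarrow> measure lborel {t\<in>A. h < f t}"
proof -
  define L where "L k = {t\<in>A. h + inverse (real (Suc k)) \<le> f t}" for k
  have union: "(\<Union>k. L k) = {t\<in>A. h < f t}"
  proof safe
    fix t k assume "t \<in> L k"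
    then have "t \<in> A" "h + inverse (real (Suc k)) \<le> f t"
      unfolding L_def by blast+
    moreover have "0 < inverse (real (Suc k))"
      by simp
    ultimately show "t \<in> A" "h < f t"
      by linarith+
  next
    fix t assume "t \<in> A" "h < f t"
    then obtain k where "inverse (real (Suc k)) < f t - h"
      using reals_Archimedean[of "f t - h"] by auto
    then have "h + inverse (real (Suc k)) \<le> f t"
      by linarith
    then show "t \<in> (\<Union>k. L k)"
      using \<open>t \<in> A\<close> unfolding L_def by blast
  qed
  have lim: "(\<lambda>k. measure lborel (L k)) \<longlonglongrightarrow> measure lborel (\<Union>k. L k)"
  proof (rule Lim_measure_incseq)
    show "range L \<subseteq> sets lborel"
      unfolding L_def using sets_superlevel[OF f A(1)] by blast
    have "inverse (real (Suc (Suc k))) \<le> inverse (real (Suc k))" for k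
      by (simp add: le_imp_inverse_le)
    then show "incseq L"
      by (intro incseq_SucI) (auto simp: L_def intro: order_trans[rotated])
    have "emeasure lborel (\<Union>k. L k) \<le> emeasure lborel A"
      by (rule emeasure_mono) (use A(1) in \<open>auto simp: union\<close>)
    then show "emeasure lborel (\<Union>k. L k) \<noteq> \<infinity>"
      using A(2) by (auto simp: top_unique)
  qed
  then have "(\<lambda>k. measure lborel (L k)) \<longlonglongrightarrow> measure lborel {t\<in>A. h < f t}"
    by (simp only: union)
  then show ?thesis
    by (simp only: L_def)
qed

section \<open>Attainment of the infimum \<open>\<delta>\<^sub>m(h)\<close>\<close>

lemma delta_le_levelmes: "length \<phi> = m \<Longrightarrow> delta m h \<le> levelmes \<phi> h"
  unfolding delta_def
  by (rule cInf_lower) (auto intro: bdd_belowI[where m=0] levelmes_bounds)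

lemma delta_greatest:
  assumes "\<And>\<phi>. length \<phi> = m \<Longrightarrow> c \<le> levelmes \<phi> h"
  shows "c \<le> delta m h"
  unfolding delta_def
proof (rule cInf_greatest)
  show "{levelmes \<phi> h |\<phi>. length \<phi> = m} \<noteq> {}"
    using length_replicate[of m 0] by blast
qed (use assms in auto)

definition red :: "real \<Rightarrow> real" where
  "red x = 2 * pi * frac (x / (2 * pi))"

lemma red_range: "red x \<in> {0..<2*pi}"
  using frac_lt_1[of "x / (2 * pi)"] by (simp add: red_def)

lemma cis_red: "cis (red x) = cis x"
proof -
  have "red x = x - 2 * pi * of_int \<lfloor>x / (2*pi)\<rfloor>"
    by (simp add: red_def frac_def algebra_simps)
  then have "cis (red x) = cis x / cis (2 * pi * of_int \<lfloor>x / (2*pi)\<rfloor>)"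
    by (simp only: cis_divide)
  also have "cis (2 * pi * of_int \<lfloor>x / (2*pi)\<rfloor>) = 1"
    by (intro cis_multiple_2pi) auto
  finally show ?thesis by simp
qed

lemma levelmes_red: "levelmes (map red \<phi>) h = levelmes \<phi> h"
proof -
  have "circP (map red \<phi>) z = circP \<phi> z" for z
    by (induction \<phi>) (auto simp: cis_red)
  then show ?thesis by (simp add: levelmes_def)
qed

lemma compact_lists_convergent_subseq:
  fixes s :: "nat \<Rightarrow> 'a::metric_space list"
  assumes "compact K" and "\<And>n. length (s n) = m" and "\<And>n. set (s n) \<subseteq> K"
  shows "\<exists>r q. strict_mono r \<and> length q = m \<and> (\<forall>i<m. (\<lambda>n. s (r n) ! i) \<longlonglongrightarrow> q ! i)"
  using assms(2,3)
proof (induction m arbitrary: s)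
  case 0
  show ?case
  proof (intro exI conjI)
    show "strict_mono (\<lambda>n::nat. n)"
      by (rule strict_monoI)
  qed (auto simp: length_0_conv)
next
  case (Suc m)
  have ne: "s n \<noteq> []" for n
    using Suc.prems(1)[of n] by (metis list.size(3) nat.distinct(1))
  have "\<forall>n. hd (s n) \<in> K"
    using Suc.prems(2) ne hd_in_set by blast
  from seq_compactE[OF compact_imp_seq_compact[OF assms(1)] this]
  obtain l r1 where r1: "strict_mono r1" "((\<lambda>n. hd (s n)) \<circ> r1) \<longlonglongrightarrow> l"
    by blast
  have "length (tl (s (r1 n))) = m \<and> set (tl (s (r1 n))) \<subseteq> K" for n
  proof -
    have "set (tl (s (r1 n))) \<subseteq> set (s (r1 n))"
      by (cases "s (r1 n)") auto
    then show ?thesis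
      using Suc.prems[of "r1 n"] by auto
  qed
  then obtain r2 q where r2: "strict_mono r2" "length q = m"
    "\<forall>i<m. (\<lambda>n. tl (s (r1 (r2 n))) ! i) \<longlonglongrightarrow> q ! i"
    using Suc.IH[of "\<lambda>n. tl (s (r1 n))"] by blast
  have "(\<lambda>n. s (r1 (r2 n)) ! i) \<longlonglongrightarrow> (l # q) ! i" if "i < Suc m" for i
  proof (cases i)
    case 0
    have "(((\<lambda>n. hd (s n)) \<circ> r1) \<circ> r2) \<longlonglongrightarrow> l"
      using LIMSEQ_subseq_LIMSEQ r1 r2 by blast
    moreover have "s (r1 (r2 n)) ! 0 = (((\<lambda>n. hd (s n)) \<circ> r1) \<circ> r2) n" for n
      using ne by (simp add: hd_conv_nth)
    ultimately show ?thesis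
      using 0 by (simp add: comp_def)
  next
    case (Suc j)
    have "s (r1 (r2 n)) ! i = tl (s (r1 (r2 n))) ! j" for n
      using Suc ne[of "r1 (r2 n)"] by (cases "s (r1 (r2 n))") auto
    then show ?thesis
      using r2(3) that Suc by simp
  qed
  moreover have "strict_mono (\<lambda>n. r1 (r2 n))"
    using strict_mono_o[OF r1(1) r2(1)] by (simp add: comp_def)
  ultimately show ?case
    using r2(2) by (intro exI[of _ "\<lambda>n. r1 (r2 n)"] exI[of _ "l # q"]) simp
qed

lemma minimizing_sequence:
  "\<exists>s. \<forall>n. length (s n) = m \<and> set (s n) \<subseteq> {0..2*pi}
            \<and> levelmes (s n) h < delta m h + inverse (real (Suc n))"
proof -
  have "\<exists>\<phi>. length \<phi> = m \<and> set \<phi> \<subseteq> {0..2*pi} \<and> levelmes \<phi> h < delta m h + inverse (real (Suc n))"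
    for n
  proof -
    have "{levelmes \<phi> h |\<phi>. length \<phi> = m} \<noteq> {}"
      using length_replicate[of m 0] by blast
    then have "\<exists>x\<in>{levelmes \<phi> h |\<phi>. length \<phi> = m}. x < delta m h + inverse (real (Suc n))"
      by (rule cInf_lessD) (simp add: delta_def[symmetric])
    then obtain \<phi> where "length \<phi> = m" "levelmes \<phi> h < delta m h + inverse (real (Suc n))"
      by blast
    moreover have "red x \<in> {0..2*pi}" for x
      using red_range[of x] by simp
    then have "set (map red \<phi>) \<subseteq> {0..2*pi}"
      by auto
    ultimately show ?thesis
      by (intro exI[of _ "map red \<phi>"]) (simp add: levelmes_red)
  qed
  then show ?thesis
    by (intro choice allI)
qed

text \<open>Any superlevel set at a
  higher level \<open>h + \<epsilon>\<close> of the limit is eventually contained in the superlevel sets at level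
  \<open>h\<close> along the sequence; letting \<open>\<epsilon> \<rightarrow> 0\<close> and using fact (a) gives the claim.\<close>
lemma levelmes_limit_le:
  assumes len: "\<And>n. length (\<phi>s n) = length \<psi>" and "length \<psi> \<ge> 1"
    and lim: "\<And>i. i < length \<psi> \<Longrightarrow> (\<lambda>n. \<phi>s n ! i) \<longlonglongrightarrow> \<psi> ! i"
    and bound: "\<And>e. e > 0 \<Longrightarrow> \<forall>\<^sub>F n in sequentially. levelmes (\<phi>s n) h < c + e"
  shows "levelmes \<psi> h \<le> c"
proof -
  define P where "P = {0..<2*pi::real}"
  have shifted: "measure lborel {t\<in>P. h + inverse (real (Suc k)) \<le> gmod \<psi> t} \<le> c" for k
  proof (rule field_le_epsilon)
    fix e :: real assume "e > 0"
    have "\<forall>\<^sub>F n in sequentially. (\<forall>t. \<bar>gmod (\<phi>s n) t - gmod \<psi> t\<bar> < inverse (real (Suc k)))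
                                 \<and> levelmes (\<phi>s n) h < c + e"
      using gmod_uniform_limit[OF len lim] bound[OF \<open>e > 0\<close>] by (intro eventually_conj) auto
    then obtain n where n: "\<forall>t. \<bar>gmod (\<phi>s n) t - gmod \<psi> t\<bar> < inverse (real (Suc k))"
      "levelmes (\<phi>s n) h < c + e"
      unfolding eventually_sequentially by blast
    have "{t\<in>P. h + inverse (real (Suc k)) \<le> gmod \<psi> t} \<subseteq> {t\<in>P. h \<le> gmod (\<phi>s n) t}"
    proof safe
      fix t assume "h + inverse (real (Suc k)) \<le> gmod \<psi> t"
      moreover have "\<bar>gmod (\<phi>s n) t - gmod \<psi> t\<bar> < inverse (real (Suc k))"
        using n(1) by blast
      ultimately show "h \<le> gmod (\<phi>s n) t"
        by linarith
    qed
    then have "measure lborel {t\<in>P. h + inverse (real (Suc k)) \<le> gmod \<psi> t} \<le> levelmes (\<phi>s n) h"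
      unfolding levelmes_def P_def
      by (rule measure_mono_fmeasurable[OF _ sets_superlevel_gmod
            fmeasurable_in_period[OF sets_superlevel_gmod]]) auto
    then show "measure lborel {t\<in>P. h + inverse (real (Suc k)) \<le> gmod \<psi> t} \<le> c + e"
      using n(2) by linarith
  qed
  have "(\<lambda>k. measure lborel {t\<in>P. h + inverse (real (Suc k)) \<le> gmod \<psi> t})
          \<longlonglongrightarrow> measure lborel {t\<in>P. h < gmod \<psi> t}"
    using continuous_on_gmod by (rule measure_superlevel_limit) (auto simp: P_def)
  then have "measure lborel {t\<in>P. h < gmod \<psi> t} \<le> c"
    using shifted by (intro LIMSEQ_le_const2) auto
  then show ?thesis
    using levelmes_eq_strict[OF \<open>length \<psi> \<ge> 1\<close>] by (simp add: P_def)
qed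

lemma delta_attained:
  assumes "m \<ge> 1"
  shows "\<exists>\<phi>. length \<phi> = m \<and> levelmes \<phi> h = delta m h"
proof -
  obtain s where s: "\<And>n. length (s n) = m \<and> set (s n) \<subseteq> {0..2*pi}
                            \<and> levelmes (s n) h < delta m h + inverse (real (Suc n))"
    using minimizing_sequence by blast
  obtain r \<psi> where r: "strict_mono r" "length \<psi> = m" "\<forall>i<m. (\<lambda>n. s (r n) ! i) \<longlonglongrightarrow> \<psi> ! i"
    using compact_lists_convergent_subseq[OF compact_Icc, of s m] s by blast
  have "levelmes \<psi> h \<le> delta m h"
  proof (rule levelmes_limit_le[of "\<lambda>n. s (r n)" \<psi>])
    fix e :: real assume "e > 0"
    have "\<forall>\<^sub>F n in sequentially. inverse (real (Suc n)) < e"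
      using LIMSEQ_inverse_real_of_nat \<open>e > 0\<close> by (rule order_tendstoD)
    then show "\<forall>\<^sub>F n in sequentially. levelmes (s (r n)) h < delta m h + e"
    proof eventually_elim
      case (elim n)
      have "inverse (real (Suc (r n))) \<le> inverse (real (Suc n))"
        using seq_suble[OF r(1), of n] by (simp add: le_imp_inverse_le)
      then show ?case
        using s[of "r n"] elim by linarith
    qed
  next
    show "length (s (r n)) = length \<psi>" for n
      using s[of "r n"] r(2) by simp
    show "length \<psi> \<ge> 1"
      using r(2) assms by simp
    show "(\<lambda>n. s (r n) ! i) \<longlonglongrightarrow> \<psi> ! i" if "i < length \<psi>" for i
      using r(2,3) that by simp
  qed
  moreover have "delta m h \<le> levelmes \<psi> h"
    by (rule delta_le_levelmes[OF r(2)])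
  ultimately show ?thesis
    using r(2) by (intro exI[of _ \<psi>]) simp
qed


section \<open>Values at the endpoints and strict monotonicity\<close>

lemma delta_at_0: "delta m 0 = 2 * pi"
proof -
  have full: "levelmes \<phi> 0 = 2 * pi" for \<phi>
  proof -
    have "{t\<in>{0..<2*pi}. 0 \<le> gmod \<phi> t} = {0..<2*pi}"
      by auto
    then show ?thesis
      by (simp add: levelmes_def)
  qed
  show ?thesis
  proof (rule antisym)
    show "delta m 0 \<le> 2 * pi"
      using delta_le_levelmes[of "replicate m 0" m 0] full by simp
    show "2 * pi \<le> delta m 0"
      by (rule delta_greatest) (simp add: full)
  qed
qed

text \<open>For \<open>P(z) = z\<^sup>m - 1\<close> the set \<open>{gmod \<ge> 2}\<close> is the finite level set \<open>{gmod = 2}\<close>.\<close>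
lemma delta_at_2:
  assumes "m \<ge> 1"
  shows "delta m 2 = 0"
proof -
  obtain \<phi> where \<phi>: "length \<phi> = m" "\<And>t. gmod \<phi> t \<le> 2"
    using exists_gmod_le_2[of m] assms by auto
  have "{t\<in>{0..<2*pi}. 2 \<le> gmod \<phi> t} = {t\<in>{0..<2*pi}. gmod \<phi> t = 2}"
    using \<phi>(2) by (auto intro: antisym)
  then have "{t\<in>{0..<2*pi}. 2 \<le> gmod \<phi> t} \<in> null_sets lborel"
    using finite_imp_null_set_lborel finite_level_set[of \<phi> 2] \<phi>(1) assms by simp
  then have "levelmes \<phi> 2 = 0"
    by (simp add: levelmes_def measure_def null_setsD1)
  then have "delta m 2 \<le> 0"
    using delta_le_levelmes[OF \<phi>(1), of 2] by simp
  moreover have "0 \<le> delta m 2"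
    by (rule delta_greatest) (simp add: levelmes_bounds)
  ultimately show ?thesis
    by simp
qed

text \<open>By fact (b) and the intermediate value theorem (starting from a zero), \<open>gmod \<phi>\<close>
  takes every value in \<open>[0,2]\<close> within one period.\<close>
lemma gmod_takes_value:
  assumes "length \<phi> \<ge> 1" and "0 \<le> v" "v \<le> 2"
  shows "\<exists>t\<in>{0..<2*pi}. gmod \<phi> t = v"
proof -
  obtain b where b: "2 \<le> gmod \<phi> b"
    using max_gmod_ge_2[OF assms(1)] by blast
  define a where "a = \<phi> ! 0"
  have "a \<in> set \<phi>"
    using assms(1) by (simp add: a_def Suc_le_eq)
  then have "gmod \<phi> a = 0"
    by (simp add: circP_root)
  then have "v \<in> closed_segment (gmod \<phi> a) (gmod \<phi> b)"
    using assms(2,3) b by (simp add: closed_segment_eq_real_ivl)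
  then obtain x where "gmod \<phi> x = v"
    using IVT'_closed_segment_real[OF _ continuous_on_gmod] by blast
  then have "gmod \<phi> (red x) = v"
    by (simp add: cis_red)
  then show ?thesis
    using red_range by blast
qed

text \<open>For a single polynomial, the measure of \<open>{gmod \<ge> h}\<close> is strictly decreasing in
  \<open>h \<in> [0,2]\<close>: the open set \<open>{h\<^sub>1 < gmod < h\<^sub>2}\<close> meets the period, hence contains an
  interval of positive length inside it.\<close>
lemma levelmes_strict_decreasing:
  assumes "length \<phi> \<ge> 1" and h: "0 \<le> h1" "h1 < h2" "h2 \<le> 2"
  shows "levelmes \<phi> h2 < levelmes \<phi> h1"
proof -
  obtain t1 where t1: "t1 \<in> {0..<2*pi}" "gmod \<phi> t1 = (h1 + h2) / 2"
    using gmod_takes_value[OF assms(1), of "(h1 + h2) / 2"] h by auto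
  have cont: "continuous_on UNIV (gmod \<phi>)"
    by (rule continuous_on_gmod)
  have "open {t. h1 < gmod \<phi> t \<and> gmod \<phi> t < h2}"
    by (intro open_Collect_conj open_Collect_less[OF continuous_on_const cont]
        open_Collect_less[OF cont continuous_on_const])
  moreover have "t1 \<in> {t. h1 < gmod \<phi> t \<and> gmod \<phi> t < h2}"
    using t1 h by auto
  ultimately obtain e where e: "e > 0" "ball t1 e \<subseteq> {t. h1 < gmod \<phi> t \<and> gmod \<phi> t < h2}"
    by (meson openE)
  define d where "d = min e (2*pi - t1)"
  define A1 where "A1 = {t\<in>{0..<2*pi}. h1 \<le> gmod \<phi> t}"
  define A2 where "A2 = {t\<in>{0..<2*pi}. h2 \<le> gmod \<phi> t}"
  have A_sets: "A1 \<in> sets lborel" "A2 \<in> sets lborel"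
    unfolding A1_def A2_def by (rule sets_superlevel_gmod)+
  have "A1 \<in> fmeasurable lborel" "A1 - A2 \<in> fmeasurable lborel"
    using A_sets by (auto simp: A1_def intro!: fmeasurable_in_period)
  have interval: "{t1<..<t1+d} \<subseteq> A1 - A2"
  proof
    fix t assume t: "t \<in> {t1<..<t1+d}"
    then have "t \<in> ball t1 e"
      by (auto simp: d_def dist_real_def)
    then show "t \<in> A1 - A2"
      using e t t1 by (auto simp: A1_def A2_def d_def)
  qed
  have "d > 0"
    using e t1 by (simp add: d_def)
  also have "d = measure lborel {t1<..<t1+d}"
    using \<open>d > 0\<close> by simp
  also have "\<dots> \<le> measure lborel (A1 - A2)"
    by (rule measure_mono_fmeasurable[OF interval _ \<open>A1 - A2 \<in> fmeasurable lborel\<close>]) simp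
  also have "\<dots> = measure lborel A1 - measure lborel A2"
  proof (rule measure_Diff[OF _ A_sets])
    show "emeasure lborel A1 \<noteq> \<infinity>"
      using \<open>A1 \<in> fmeasurable lborel\<close> by (simp add: fmeasurable_def less_top)
    show "A2 \<subseteq> A1"
      using h by (auto simp: A1_def A2_def)
  qed
  finally show ?thesis
    by (simp add: levelmes_def A1_def A2_def)
qed

text \<open>Part (3) of the theorem: compare with a minimiser at the lower level.\<close>
lemma delta_strict_decreasing:
  assumes "m \<ge> 1" and "0 \<le> h1" "h1 < h2" "h2 \<le> 2"
  shows "delta m h2 < delta m h1"
proof -
  obtain \<phi> where \<phi>: "length \<phi> = m" "levelmes \<phi> h1 = delta m h1"
    using delta_attained[OF assms(1)] by blast
  have "delta m h2 \<le> levelmes \<phi> h2"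
    by (rule delta_le_levelmes[OF \<phi>(1)])
  also have "\<dots> < levelmes \<phi> h1"
    using levelmes_strict_decreasing[of \<phi> h1 h2] \<phi>(1) assms by simp
  finally show ?thesis
    using \<phi>(2) by simp
qed

theorem lemma2:
  fixes m :: nat
  assumes "m \<ge> 1"
  shows "(\<forall>h\<in>{0..2}. \<exists>\<phi>. length \<phi> = m \<and> levelmes \<phi> h = delta m h)
       \<and> delta m 0 = 2 * pi \<and> delta m 2 = 0
       \<and> (\<forall>h1\<in>{0..2}. \<forall>h2\<in>{0..2}. h1 < h2 \<longrightarrow> delta m h2 < delta m h1)"
  using delta_attained[OF assms] delta_at_0 delta_at_2[OF assms]
    delta_strict_decreasing[OF assms] by auto

end
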